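(* Assume that spacetime is Minkowski in $1+n$ dimensions and that the Nontrivial Poincaré Invariance postulate and the Existence of Classical Momentum postulate (both stated in the context) hold for particles of the type $\mathcal{P}$, which have mass $m>0$. Let $p_{\text{rest}}=(m,0,\ldots,0)^{\text{t}}$ and consider, for any internal degrees of freedom of such a particle with finite-dimensional state space $\mathcal{S}\subset\mathbb{R}^{d+1}$, the maps $R^{\text{st}}_{p_{\text{rest}}}(P(x,\Lambda)):\mathcal{S}\to\mathcal{S}$ describing how the internal state $\zeta$ of the classical-momentum state $Z^{\text{class}}_{p_{\text{rest}},\zeta}$ transforms under $P(x,\Lambda)\in\mathfrak{Poin}$, i.e. $Z^{\text{class}}_{p_{\text{rest}},\zeta}\mapsto Z^{\text{class}}_{\Lambda p_{\text{rest}},\,R^{\text{st}}_{p_{\text{rest}}}(P(x,\Lambda))\zeta}$. Then $R^{\text{st}}_{p_{\text{rest}}}$ restricted to spatial rotations is a representation of $\mathrm{SO}(n)$: $$R^{\text{st}}_{p_{\text{rest}}}(P(\vec{0},O_2))\,R^{\text{st}}_{p_{\text{rest}}}(P(\vec{0},O_1))=R^{\text{st}}_{p_{\text{rest}}}(P(\vec{0},O_2O_1))$$ for all $O_i=\begin{pmatrix}1&0\\0&\tilde O_i\end{pmatrix}$ with $\tilde O_i\in\mathrm{SO}(n)$, $i\in\{1,2\}$.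
   Context: Minkowski spacetime in $1+n$ dimensions has metric $\eta=\mathrm{diag}(-1,1,\ldots,1)$ (units with $c=1$). A Poincaré transformation $P(a,\Lambda)$ acts by $x\mapsto \Lambda x+a$ with $a\in\mathbb{R}^{1+n}$ and $\Lambda^{\text{t}}\eta\Lambda=\eta$; they compose as $P(a',\Lambda')\circ P(a,\Lambda)=P(a'+\Lambda'a,\Lambda'\Lambda)$. $\mathfrak{L}$ denotes the proper orthochronous Lorentz group (Lorentz transformations continuously connected to the identity: rotations and boosts) and $\mathfrak{Poin}=\{P(a,\Lambda):\Lambda\in\mathfrak{L}\}$. General probabilistic theories (GPTs): a finite-dimensional system of dimension $d$ has a closed convex state space $\mathcal{S}=\{(1,\tilde\zeta)^{\text{t}}:\tilde\zeta\in\tilde{\mathcal{S}}\}\subset\mathbb{R}^{d+1}$, a convex set of effects $\mathcal{E}\subseteq\{\varepsilon\in\mathbb{R}^{d+1}:0\le\varepsilon\cdot\zeta\le1\ \forall\zeta\in\mathcal{S}\}$ containing the unit effect $u=(1,0,\ldots,0)^{\text{t}}$ and the zero effect, with outcome probability $\varepsilon(\zeta)=\varepsilon\cdot\zeta$, and a set of allowed linear transformations $\mathcal{S}\to\mathcal{S}$. A continuous-dimensional GPT has sets $\mathscr{S}$ (states), $\mathscr{E}$ (effects, maps $\mathscr{S}\to[0,1]$), $\mathscr{T}$ (maps $\mathscr{S}\to\mathscr{S}$). A GPT is invariant under a group $\mathfrak{G}$ of changes of reference frame if there are representations $\hat{\mathbf{R}}^{\text{st}},\hat{\mathbf{R}}^{\text{ef}}$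 of $\mathfrak{G}$ (identity to identity, $\hat{\mathbf{R}}(G_2)\circ\hat{\mathbf{R}}(G_1)=\hat{\mathbf{R}}(G_2\circ G_1)$) on $\mathscr{S}$ and $\mathscr{E}$ such that under $G\in\mathfrak{G}$ states and effects transform as $Z\mapsto\hat{\mathbf{R}}^{\text{st}}(G)[Z]$, $\hat E\mapsto\hat{\mathbf{R}}^{\text{ef}}(G)[\hat E]$, and outcome probabilities are invariant: $\hat E'[Z']=\hat E[Z]$. It is nontrivially invariant if these representations are not trivial. Particles of the type $\mathcal{P}$: massive particles of mass $m>0$, each described by the same GPT with state/effect/transformation sets $\mathscr{S},\mathscr{E},\mathscr{T}$ (including spacetime degrees of freedom such as momentum), whose internal degrees of freedom are described by a finite-dimensional GPT $(\mathcal{S},\mathcal{E},\mathcal{T})$ of dimension $d$. Nontrivial Poincaré Invariance: the GPT of a particle of type $\mathcal{P}$ is nontrivially invariant under $\mathfrak{Poin}$. Existence of Classical Momentum: with $p_{\text{rest}}=(m,0,\ldots,0)^{\text{t}}$ and $\Pi_{p_{\text{rest}}}=\{\Lambda p_{\text{rest}}:\Lambda\in\mathfrak{L}\}$, there are states $Z^{\text{class}}_{p,\zeta}\in\mathscr{S}$ and effects $\hat E^{\text{class}}_{p,\varepsilon}\in\mathscr{E}$ for all $p\in\Pi_{p_{\text{rest}}}$, $\zeta\in\mathcal{S}$, $\varepsilon\in\mathcal{E}$, with $\hat E^{\text{class}}_{p',\varepsilon}[Z^{\text{class}}_{p,\zeta}]=\delta(p'-p)\,\varepsilon\cdot\zeta$,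 and under $P(x,\Lambda)\in\mathfrak{Poin}$: $\hat{\mathbf{R}}^{\text{st}}(P(x,\Lambda))[Z^{\text{class}}_{p,\zeta}]=Z^{\text{class}}_{\Lambda p,\,R^{\text{st}}_p(P(x,\Lambda))\zeta}$ and $\hat{\mathbf{R}}^{\text{ef}}(P(x,\Lambda))[\hat E^{\text{class}}_{p,\varepsilon}]=\hat E^{\text{class}}_{\Lambda p,\,R^{\text{ef}}_p(P(x,\Lambda))\varepsilon}$ for some maps $R^{\text{st}}_p(P(x,\Lambda)):\mathcal{S}\to\mathcal{S}$, $R^{\text{ef}}_p(P(x,\Lambda)):\mathcal{E}\to\mathcal{E}$. *)

theory Defs
  imports "HOL-Analysis.Analysis"
begin

text \<open>Minkowski spacetime in 1+n dimensions: coordinates indexed by the type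
  'n option, where None is the time index and Some j the j-th spatial index.\<close>

type_synonym 'n spacetime = "real ^ ('n option)"
type_synonym 'n lmatrix = "real ^ ('n option) ^ ('n option)"
type_synonym 'n poincare = "'n spacetime \<times> 'n lmatrix"

definition eta :: "('n::finite) lmatrix" where
  "eta = (\<chi> i j. if i = j then (if i = None then -1 else 1) else 0)"

definition lorentz :: "('n::finite) lmatrix \<Rightarrow> bool" where
  "lorentz L \<longleftrightarrow> transpose L ** eta ** L = eta"

definition proper_lorentz :: "('n::finite) lmatrix set" where
  "proper_lorentz = {L. lorentz L \<and> det L = 1 \<and> L $ None $ None \<ge> 1}"

text \<open>Poincare transformation P(a,L) acts by x \<mapsto> L x + a.\<close>
definition poin_comp :: "('n::finite) poincare \<Rightarrow> 'n poincare \<Rightarrow> 'n poincare" where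
  "poin_comp g' g = (fst g' + snd g' *v fst g, snd g' ** snd g)"

definition poin_id :: "('n::finite) poincare" where
  "poin_id = (0, mat 1)"

definition Poin :: "('n::finite) poincare set" where
  "Poin = {g. snd g \<in> proper_lorentz}"

definition SO_mat :: "(real ^ 'n ^ 'n) set" where
  "SO_mat = {Q. orthogonal_matrix Q \<and> det Q = 1}"

definition spatial_rot :: "real ^ ('n::finite) ^ 'n \<Rightarrow> 'n lmatrix" where
  "spatial_rot Q = (\<chi> i j. case (i, j) of
        (None, None) \<Rightarrow> 1
      | (Some a, Some b) \<Rightarrow> Q $ a $ b
      | _ \<Rightarrow> 0)"

definition p_rest :: "real \<Rightarrow> ('n::finite) spacetime" where
  "p_rest m = (\<chi> i. if i = None then m else 0)"

definition mass_shell :: "real \<Rightarrow> ('n::finite) spacetime set" where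
  "mass_shell m = {L *v p_rest m | L. L \<in> proper_lorentz}"

text \<open>Finite-dimensional GPT: state vectors in R^(d+1) (index type 'k with
  d+1 = CARD('k)) whose distinguished coordinate i0 equals 1; effects are
  vectors giving outcome probabilities eps \<bullet> zeta in [0,1], containing the
  unit effect u = e_{i0} and the zero effect. Outcome probabilities determine
  the state (standard GPT convention that states are identified by their
  outcome statistics).\<close>
definition finite_gpt :: "('k::finite) \<Rightarrow> (real ^ 'k) set \<Rightarrow> (real ^ 'k) set \<Rightarrow> bool" where
  "finite_gpt i0 S E \<longleftrightarrow>
     closed S \<and> convex S \<and> (\<forall>z\<in>S. z $ i0 = 1) \<and>
     convex E \<and> axis i0 1 \<in> E \<and> 0 \<in> E \<and>
     (\<forall>e\<in>E. \<forall>z\<in>S. 0 \<le> e \<bullet> z \<and> e \<bullet> z \<le> 1) \<and>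
     (\<forall>z1\<in>S. \<forall>z2\<in>S. (\<forall>e\<in>E. e \<bullet> z1 = e \<bullet> z2) \<longrightarrow> z1 = z2)"

definition cont_gpt :: "'s set \<Rightarrow> 'e set \<Rightarrow> ('e \<Rightarrow> 's \<Rightarrow> real) \<Rightarrow> bool" where
  "cont_gpt SS EE eval \<longleftrightarrow> (\<forall>e\<in>EE. \<forall>z\<in>SS. 0 \<le> eval e z \<and> eval e z \<le> 1)"

definition is_rep :: "'g set \<Rightarrow> ('g \<Rightarrow> 'g \<Rightarrow> 'g) \<Rightarrow> 'g \<Rightarrow> 'x set \<Rightarrow> ('g \<Rightarrow> 'x \<Rightarrow> 'x) \<Rightarrow> bool" where
  "is_rep G cmp one X R \<longleftrightarrow>
     (\<forall>g\<in>G. \<forall>x\<in>X. R g x \<in> X) \<and>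
     (\<forall>x\<in>X. R one x = x) \<and>
     (\<forall>g1\<in>G. \<forall>g2\<in>G. \<forall>x\<in>X. R g2 (R g1 x) = R (cmp g2 g1) x)"

definition trivial_rep :: "'g set \<Rightarrow> 'x set \<Rightarrow> ('g \<Rightarrow> 'x \<Rightarrow> 'x) \<Rightarrow> bool" where
  "trivial_rep G X R \<longleftrightarrow> (\<forall>g\<in>G. \<forall>x\<in>X. R g x = x)"

definition nontrivially_poincare_invariant ::
  "'s set \<Rightarrow> 'e set \<Rightarrow> ('e \<Rightarrow> 's \<Rightarrow> real) \<Rightarrow>
   (('n::finite) poincare \<Rightarrow> 's \<Rightarrow> 's) \<Rightarrow> ('n poincare \<Rightarrow> 'e \<Rightarrow> 'e) \<Rightarrow> bool" where
  "nontrivially_poincare_invariant SS EE eval Rst Ref \<longleftrightarrow>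
     is_rep Poin poin_comp poin_id SS Rst \<and>
     is_rep Poin poin_comp poin_id EE Ref \<and>
     (\<forall>g\<in>Poin. \<forall>e\<in>EE. \<forall>z\<in>SS. eval (Ref g e) (Rst g z) = eval e z) \<and>
     \<not> (trivial_rep Poin SS Rst \<and> trivial_rep Poin EE Ref)"

text \<open>Existence of Classical Momentum. The delta distribution delta(p'-p) is
  rendered as the sharp (Kronecker) delta on the mass shell.\<close>
definition classical_momentum ::
  "real \<Rightarrow> (real ^ 'k) set \<Rightarrow> (real ^ 'k) set \<Rightarrow>
   's set \<Rightarrow> 'e set \<Rightarrow> ('e \<Rightarrow> 's \<Rightarrow> real) \<Rightarrow>
   (('n::finite) poincare \<Rightarrow> 's \<Rightarrow> 's) \<Rightarrow> ('n poincare \<Rightarrow> 'e \<Rightarrow> 'e) \<Rightarrow>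
   ('n spacetime \<Rightarrow> real ^ 'k \<Rightarrow> 's) \<Rightarrow> ('n spacetime \<Rightarrow> real ^ 'k \<Rightarrow> 'e) \<Rightarrow>
   ('n spacetime \<Rightarrow> 'n poincare \<Rightarrow> real ^ 'k \<Rightarrow> real ^ 'k) \<Rightarrow>
   ('n spacetime \<Rightarrow> 'n poincare \<Rightarrow> real ^ 'k \<Rightarrow> real ^ 'k) \<Rightarrow> bool" where
  "classical_momentum m S E SS EE eval Rst Ref Zc Ec RstI RefI \<longleftrightarrow>
     (\<forall>p\<in>mass_shell m. \<forall>z\<in>S. Zc p z \<in> SS) \<and>
     (\<forall>p\<in>mass_shell m. \<forall>e\<in>E. Ec p e \<in> EE) \<and>
     (\<forall>p\<in>mass_shell m. \<forall>p'\<in>mass_shell m. \<forall>z\<in>S. \<forall>e\<in>E.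
        eval (Ec p' e) (Zc p z) = (if p' = p then 1 else 0) * (e \<bullet> z)) \<and>
     (\<forall>p\<in>mass_shell m. \<forall>g\<in>Poin. \<forall>z\<in>S.
        RstI p g z \<in> S \<and> Rst g (Zc p z) = Zc (snd g *v p) (RstI p g z)) \<and>
     (\<forall>p\<in>mass_shell m. \<forall>g\<in>Poin. \<forall>e\<in>E.
        RefI p g e \<in> E \<and> Ref g (Ec p e) = Ec (snd g *v p) (RefI p g e))"

end

theory Submission
  imports Defs
begin

text \<open>On the stabiliser of a momentum p, the internal maps RstI p compose like Rst itself, because
  Zc p is injective on internal states: the effect Ec p e separates Zc p z1 from Zc p z2 exactly
  as e separates z1 from z2, and states of a finite GPT are determined by their outcome
  probabilities. Spatial rotations are proper orthochronous Lorentz transformations fixing p_rest.\<close>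

lemma sum_UNIV_option:
  "(\<Sum>x\<in>UNIV. f x) = f None + (\<Sum>a\<in>UNIV. f (Some a :: ('n::finite) option))"
  by (simp add: UNIV_option_conv sum.reindex)

lemma prod_UNIV_option:
  "(\<Prod>x\<in>UNIV. f x) = f None * (\<Prod>a\<in>UNIV. f (Some a :: ('n::finite) option))"
  by (simp add: UNIV_option_conv prod.reindex)

lemma permutes_map_option:
  assumes "q permutes UNIV"
  shows "map_option q permutes UNIV"
proof (rule bij_imp_permutes)
  have "map_option q \<circ> map_option (inv q) = id" "map_option (inv q) \<circ> map_option q = id"
    using permutes_inverses[OF assms]
    by (simp_all add: fun_eq_iff option.map_comp comp_def option.map_ident)
  then show "bij_betw (map_option q) UNIV UNIV"
    using o_bij by blast
qed simp

lemma sign_map_option: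
  assumes "q permutes (UNIV :: ('n::finite) set)"
  shows "sign (map_option q) = sign q"
proof -
  have "map_permutation UNIV Some q = map_option q"
  proof
    fix x show "map_permutation UNIV Some q x = map_option q x"
      by (cases x) (auto simp: map_permutation_def restrict_id_def)
  qed
  then show ?thesis
    using sign_map_permutation[of Some UNIV q] assms by simp
qed

lemma inj_map_option_fun: "inj map_option"
proof (rule injI)
  fix f g :: "'a \<Rightarrow> 'b"
  assume "map_option f = map_option g"
  then have "map_option f (Some x) = map_option g (Some x)" for x
    by simp
  then show "f = g"
    by (simp add: fun_eq_iff)
qed

lemma permutations_fixing_None:
  "{p. p permutes (UNIV :: ('n::finite) option set) \<and> p None = None}
     = map_option ` {q. q permutes UNIV}"
proof (intro equalityI subsetI)
  fix p :: "'n option \<Rightarrow> 'n option"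
  assume "p \<in> {p. p permutes UNIV \<and> p None = None}"
  then have inj_p: "inj p" and p_None: "p None = None"
    by (auto simp: permutes_inj)
  define q where "q a = the (p (Some a))" for a
  have p_Some: "p (Some a) = Some (q a)" for a
    using inj_p p_None by (metis injD option.collapse option.distinct(1) q_def)
  have "p = map_option q"
  proof
    fix x show "p x = map_option q x"
      by (cases x) (simp_all add: p_None p_Some)
  qed
  moreover have "inj q"
    using inj_p by (metis injD injI option.inject p_Some)
  then have "bij q"
    by (simp add: bij_def finite_UNIV_inj_surj)
  then have "q permutes UNIV"
    by (rule bij_imp_permutes) simp
  ultimately show "p \<in> map_option ` {q. q permutes UNIV}"
    by blast
qed (auto simp: permutes_map_option)

lemma spatial_rot_nth [simp]:
  "spatial_rot Q $ None $ None = 1"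
  "spatial_rot Q $ None $ Some b = 0"
  "spatial_rot Q $ Some a $ None = 0"
  "spatial_rot Q $ Some a $ Some b = Q $ a $ b"
  by (simp_all add: spatial_rot_def)

lemma spatial_rot_eqI:
  assumes "A $ None $ None = 1" "\<And>b. A $ None $ Some b = 0" "\<And>a. A $ Some a $ None = 0"
    and "\<And>a b. A $ Some a $ Some b = Q $ a $ b"
  shows "A = spatial_rot Q"
proof -
  have "A $ i $ j = spatial_rot Q $ i $ j" for i j
    using assms by (cases i; cases j) simp_all
  then show ?thesis
    by (simp add: vec_eq_iff)
qed

lemma spatial_rot_mult: "spatial_rot A ** spatial_rot B = spatial_rot (A ** B)"
  by (rule spatial_rot_eqI) (simp_all add: matrix_matrix_mult_def sum_UNIV_option)

lemma transpose_spatial_rot: "transpose (spatial_rot A) = spatial_rot (transpose A)"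
  by (rule spatial_rot_eqI) (simp_all add: transpose_def)

lemma spatial_rot_mat_1: "spatial_rot (mat 1) = mat 1"
  by (rule spatial_rot_eqI[symmetric]) (simp_all add: mat_def)

lemma eta_nth: "eta $ i $ j = (if i = j then if i = None then -1 else 1 else 0)"
  by (simp add: eta_def)

lemma eta_mult_left: "eta ** A = (\<chi> i j. (if i = None then -1 else 1) * A $ i $ j)"
  by (simp add: vec_eq_iff matrix_matrix_mult_def eta_nth mult_delta_left)

lemma eta_mult_right: "A ** eta = (\<chi> i j. A $ i $ j * (if j = None then -1 else 1))"
  by (simp add: vec_eq_iff matrix_matrix_mult_def eta_nth mult_delta_right)

lemma eta_spatial_rot_commute: "eta ** spatial_rot A = spatial_rot A ** eta"
proof -
  have "(if i = None then -1 else 1) * spatial_rot A $ i $ j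
      = spatial_rot A $ i $ j * (if j = None then -1 else 1)" for i j
    by (cases i; cases j) simp_all
  then show ?thesis
    unfolding eta_mult_left eta_mult_right vec_eq_iff by simp
qed

lemma lorentz_spatial_rot:
  assumes "orthogonal_matrix Q"
  shows "lorentz (spatial_rot Q)"
proof -
  have "transpose (spatial_rot Q) ** eta ** spatial_rot Q
      = spatial_rot (transpose Q) ** (eta ** spatial_rot Q)"
    by (simp add: matrix_mul_assoc transpose_spatial_rot)
  also have "\<dots> = (spatial_rot (transpose Q) ** spatial_rot Q) ** eta"
    by (simp add: eta_spatial_rot_commute matrix_mul_assoc)
  also have "\<dots> = spatial_rot (transpose Q ** Q) ** eta"
    by (simp add: spatial_rot_mult)
  finally show ?thesis
    using assms by (simp add: lorentz_def orthogonal_matrix spatial_rot_mat_1)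
qed

lemma det_spatial_rot: "det (spatial_rot (Q :: real ^ ('n::finite) ^ 'n)) = det Q"
proof -
  let ?t = "\<lambda>p. of_int (sign p) * (\<Prod>i\<in>UNIV. spatial_rot Q $ i $ p i)"
  have vanish: "?t p = 0" if "p None \<noteq> None" for p
    using that by (auto simp: prod_UNIV_option)
  have "det (spatial_rot Q) = sum ?t {p. p permutes UNIV}"
    by (simp add: det_def)
  also have "\<dots> = sum ?t {p. p permutes UNIV \<and> p None = None}"
    using vanish by (intro sum.mono_neutral_right) (auto simp: finite_permutations)
  also have "\<dots> = sum (?t \<circ> map_option) {q. q permutes UNIV}"
    unfolding permutations_fixing_None
    by (intro sum.reindex inj_on_subset[OF inj_map_option_fun]) simp
  also have "\<dots> = det Q"
    by (simp add: det_def sign_map_option prod_UNIV_option)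
  finally show ?thesis .
qed

lemma spatial_rot_proper_lorentz: "Q \<in> SO_mat \<Longrightarrow> spatial_rot Q \<in> proper_lorentz"
  by (simp add: SO_mat_def proper_lorentz_def lorentz_spatial_rot det_spatial_rot)

lemma spatial_rot_fixes_p_rest: "spatial_rot Q *v p_rest m = p_rest m"
proof -
  have "(spatial_rot Q *v p_rest m) $ i = p_rest m $ i" for i
    by (cases i) (simp_all add: matrix_vector_mult_def sum_UNIV_option p_rest_def)
  then show ?thesis
    by (simp add: vec_eq_iff)
qed

lemma mat_1_proper_lorentz: "mat 1 \<in> proper_lorentz"
  by (simp add: proper_lorentz_def lorentz_def) (simp add: mat_def)

lemma p_rest_in_mass_shell: "p_rest m \<in> mass_shell m"
  unfolding mass_shell_def using mat_1_proper_lorentz by force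

lemma SO_mat_mult: "A \<in> SO_mat \<Longrightarrow> B \<in> SO_mat \<Longrightarrow> A ** B \<in> SO_mat"
  by (simp add: SO_mat_def orthogonal_matrix_mul det_mul)

lemma classical_state_inj:
  assumes "finite_gpt i0 S E"
    and "classical_momentum m S E SS EE eval Rst Ref Zc Ec RstI RefI"
    and "p \<in> mass_shell m" and "z1 \<in> S" and "z2 \<in> S"
    and "Zc p z1 = Zc p z2"
  shows "z1 = z2"
proof -
  have "e \<bullet> z1 = e \<bullet> z2" if "e \<in> E" for e
  proof -
    have "e \<bullet> z1 = eval (Ec p e) (Zc p z1)"
      using assms(2-4) that by (simp add: classical_momentum_def)
    also have "\<dots> = e \<bullet> z2"
      using assms(2,3,5,6) that by (simp add: classical_momentum_def)
    finally show ?thesis .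
  qed
  moreover have "\<forall>z1\<in>S. \<forall>z2\<in>S. (\<forall>e\<in>E. e \<bullet> z1 = e \<bullet> z2) \<longrightarrow> z1 = z2"
    using assms(1) unfolding finite_gpt_def by blast
  ultimately show ?thesis
    using assms(4,5) by blast
qed

lemma internal_rep_on_stabiliser:
  assumes gpt: "finite_gpt i0 S E"
    and rep: "is_rep Poin poin_comp poin_id SS Rst"
    and cm: "classical_momentum m S E SS EE eval Rst Ref Zc Ec RstI RefI"
    and p: "p \<in> mass_shell m"
    and g1: "g1 \<in> Poin" "snd g1 *v p = p"
    and g2: "g2 \<in> Poin" "snd g2 *v p = p"
    and g21: "poin_comp g2 g1 \<in> Poin"
    and z: "z \<in> S"
  shows "RstI p g2 (RstI p g1 z) = RstI p (poin_comp g2 g1) z"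
proof -
  have covariance: "RstI p g z \<in> S \<and> Rst g (Zc p z) = Zc p (RstI p g z)"
    if "g \<in> Poin" "snd g *v p = p" "z \<in> S" for g z
  proof -
    have "\<forall>g\<in>Poin. \<forall>z\<in>S. RstI p g z \<in> S \<and> Rst g (Zc p z) = Zc (snd g *v p) (RstI p g z)"
      using cm p unfolding classical_momentum_def by blast
    then show ?thesis
      using that by simp
  qed
  have "Zc p z \<in> SS"
    using cm p z unfolding classical_momentum_def by blast
  have g21_fixes: "snd (poin_comp g2 g1) *v p = p"
    using g1 g2 by (simp add: poin_comp_def matrix_vector_mul_assoc[symmetric])
  have "Zc p (RstI p (poin_comp g2 g1) z) = Rst (poin_comp g2 g1) (Zc p z)"
    using covariance g21 g21_fixes z by simp
  also have "\<dots> = Rst g2 (Rst g1 (Zc p z))"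
    using rep g1 g2 \<open>Zc p z \<in> SS\<close> by (simp add: is_rep_def)
  also have "\<dots> = Zc p (RstI p g2 (RstI p g1 z))"
    using covariance g1 g2 z by simp
  finally show ?thesis
    using classical_state_inj[OF gpt cm p] covariance g1 g2 g21 g21_fixes z by simp
qed

theorem lemma1:
  fixes m :: real
    and i0 :: "'k::finite"
    and S E :: "(real ^ 'k) set"
    and SS :: "'s set" and EE :: "'e set" and eval :: "'e \<Rightarrow> 's \<Rightarrow> real"
    and Rst :: "('n::finite) poincare \<Rightarrow> 's \<Rightarrow> 's"
    and Ref :: "'n poincare \<Rightarrow> 'e \<Rightarrow> 'e"
    and Zc :: "'n spacetime \<Rightarrow> real ^ 'k \<Rightarrow> 's"
    and Ec :: "'n spacetime \<Rightarrow> real ^ 'k \<Rightarrow> 'e"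
    and RstI RefI :: "'n spacetime \<Rightarrow> 'n poincare \<Rightarrow> real ^ 'k \<Rightarrow> real ^ 'k"
  assumes "m > 0"
    and "finite_gpt i0 S E"
    and "cont_gpt SS EE eval"
    and "nontrivially_poincare_invariant SS EE eval Rst Ref"
    and "classical_momentum m S E SS EE eval Rst Ref Zc Ec RstI RefI"
    and "O1 \<in> SO_mat" and "O2 \<in> SO_mat"
    and "z \<in> S"
  shows "RstI (p_rest m) (0, spatial_rot O2) (RstI (p_rest m) (0, spatial_rot O1) z)
         = RstI (p_rest m) (0, spatial_rot O2 ** spatial_rot O1) z"
proof -
  have rep: "is_rep Poin poin_comp poin_id SS Rst"
    using assms(4) by (simp add: nontrivially_poincare_invariant_def)
  have rot_Poin: "(0, spatial_rot Q) \<in> Poin" if "Q \<in> SO_mat" for Q :: "real ^ 'n ^ 'n"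
    using that by (simp add: Poin_def spatial_rot_proper_lorentz)
  have comp: "poin_comp (0, spatial_rot O2) (0, spatial_rot O1)
      = (0, spatial_rot O2 ** spatial_rot O1)"
    by (simp add: poin_comp_def)
  show ?thesis
    using internal_rep_on_stabiliser[OF assms(2) rep assms(5) p_rest_in_mass_shell
        rot_Poin[OF assms(6)] _ rot_Poin[OF assms(7)] _ _ assms(8)]
    by (simp add: comp spatial_rot_mult rot_Poin SO_mat_mult assms(6,7) spatial_rot_fixes_p_rest)
qed

end
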